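(* Let $p \geq 3$ be a prime and $x, y \in \mathbb{Z}$ with $x^2 - 2 = y^p$ and $y \neq -1$. Then: (1) every prime factor of $\frac{y^p-1}{y-1}$ is $\equiv \pm 1 \pmod{12}$; (2) every prime factor of $\frac{y^p-1}{y-1}$ is $p$ or $\equiv 1 \pmod p$; either $p \nmid (y-1)$ and $\frac{y^p-1}{y-1} \equiv 1 \pmod p$, or $p \mid (y-1)$ and $\frac{y^p-1}{y-1} \equiv p \pmod{p^2}$, and the latter case cannot happen unless $p \equiv \pm 1 \pmod{12}$; (3) $\frac{y^p-1}{y-1} \equiv 1 \pmod{24}$; (4) if $p \equiv 2 \pmod 3$ or $p = 3$, then $3 \nmid x$. *)

theory Defs
  imports "HOL-Number_Theory.Number_Theory"
begin

end

theory Submission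
  imports Defs
begin

(* Write S = 1 + y + ... + y^(p-1) = (y^p - 1) / (y - 1). As x is odd, y^p = x^2 - 2 is -1 mod 8,
   hence y = -1 mod 8 and S = 1 mod 8. A prime q dividing S divides y^p - 1 = x^2 - 3, so 3 is a
   square modulo q, and quadratic reciprocity gives q = +-1 mod 12; q = 3 is excluded because it
   forces p = 3 and 3 | x, and then x^2 - 2 = 7 mod 9 is not a cube. Multiplying the prime factors,
   S = +-1 mod 12, which together with S = 1 mod 8 gives S = 1 mod 24. The statements modulo p come
   from the order of y modulo q and from (1 + p t)^i = 1 + i p t mod p^2. Finally 3 | x would give
   y^p = 1 mod 3, so y = 1 mod 3 and S = p mod 3, contradicting S = 1 mod 3. *)

lemma fermat_little_int:
  fixes y :: int
  assumes "prime p"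
  shows "[y ^ p = y] (mod int p)"
proof -
  define a where "a = nat (y mod int p)"
  have y_cong_a: "[y = int a] (mod int p)"
    using assms by (simp add: a_def cong_def prime_gt_0_nat)
  have "[a ^ p = a] (mod p)"
  proof (cases "p dvd a")
    case True
    moreover from True have "p dvd a ^ p"
      using assms by (meson dvd_power dvd_trans prime_gt_0_nat)
    ultimately show ?thesis
      by (simp add: cong_def dvd_imp_mod_0)
  next
    case False
    then have "[a * a ^ (p - 1) = a * 1] (mod p)"
      using assms by (intro cong_scalar_left fermat_theorem)
    then show ?thesis
      using assms by (simp add: power_eq_if prime_gt_0_nat split: if_splits)
  qed
  then have "[int a ^ p = int a] (mod int p)"
    by (metis cong_int_iff of_nat_power)
  then show ?thesis
    by (meson y_cong_a cong_pow cong_sym cong_trans)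
qed

lemma prime_dvd_minus_1_if_prime_order:
  fixes a p q :: nat
  assumes "prime p" "prime q" "[a ^ p = 1] (mod q)" "[a \<noteq> 1] (mod q)"
  shows "p dvd q - 1"
proof -
  have "ord q a = p"
    using assms ord_divides'[of a p q] ord_eq_Suc_0_iff[of q a] prime_nat_iff by auto
  have "\<not> q dvd a"
  proof
    assume "q dvd a"
    then have "[a ^ p = 0] (mod q)"
      using assms(1) by (meson cong_0_iff dvd_power dvd_trans prime_gt_0_nat)
    with assms(2,3) show False
      by (metis cong_0_iff cong_sym cong_trans not_prime_unit)
  qed
  then have "[a ^ (q - 1) = 1] (mod q)"
    using assms(2) by (intro fermat_theorem)
  then show ?thesis
    using \<open>ord q a = p\<close> ord_divides'[of a "q - 1" q] by simp
qed

lemma prime_cong_1_if_prime_order_int: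
  fixes y q :: int
  assumes "prime p" "prime q" "[y ^ p = 1] (mod q)" "[y \<noteq> 1] (mod q)"
  shows "[q = 1] (mod int p)"
proof -
  (* ord is only available on nat, hence the transfer to nat. *)
  define n a where "n = nat q" and "a = nat (y mod q)"
  have q_eq: "q = int n"
    using assms(2) by (simp add: n_def prime_ge_0_int)
  have y_cong_a: "[y = int a] (mod q)"
    using assms(2) by (simp add: a_def cong_def prime_gt_0_int)
  have "[int (a ^ p) = int 1] (mod int n)"
    using assms(3) y_cong_a q_eq by (metis cong_pow cong_sym cong_trans of_nat_1 of_nat_power)
  then have "[a ^ p = 1] (mod n)"
    using cong_int_iff by blast
  moreover have "[int a \<noteq> int 1] (mod int n)"
    using assms(4) y_cong_a q_eq by (metis cong_trans of_nat_1)
  then have "[a \<noteq> 1] (mod n)"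
    using cong_int_iff by blast
  ultimately have "p dvd n - 1"
    using assms(1,2) q_eq prime_dvd_minus_1_if_prime_order by simp
  moreover have "n \<ge> 1"
    using assms(2) q_eq prime_ge_1_nat by simp
  ultimately show ?thesis
    using q_eq by (simp add: cong_iff_dvd_diff flip: int_dvd_int_iff)
qed

lemma geometric_sum_cong_of_cong_1:
  fixes y m :: int
  assumes "[y = 1] (mod m)"
  shows "[(\<Sum>i<n. y ^ i) = int n] (mod m)"
proof -
  have "[(\<Sum>i<n. y ^ i) = (\<Sum>i<n. 1 ^ i)] (mod m)"
    using assms by (intro cong_sum cong_pow)
  then show ?thesis
    by simp
qed

lemma geometric_sum_cong_of_cong_minus_1:
  fixes y m :: int
  assumes "[y = -1] (mod m)" and "odd n"
  shows "[(\<Sum>i<n. y ^ i) = 1] (mod m)"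
proof -
  have "[(\<Sum>i<n. y ^ i) = (\<Sum>i<n. (-1) ^ i)] (mod m)"
    using assms(1) by (intro cong_sum cong_pow)
  moreover have "(\<Sum>i<2 * k + 1. (-1::int) ^ i) = 1" for k
    by (induction k) auto
  ultimately show ?thesis
    using assms(2) by (metis oddE)
qed

lemma one_plus_power_cong:
  fixes a :: int
  shows "[(1 + a) ^ n = 1 + int n * a] (mod a\<^sup>2)"
proof (induction n)
  case (Suc n)
  have "[(1 + a) ^ Suc n = (1 + a) * (1 + int n * a)] (mod a\<^sup>2)"
    using Suc by (simp add: cong_scalar_left)
  also have "(1 + a) * (1 + int n * a) = 1 + int (Suc n) * a + int n * a\<^sup>2"
    by (simp add: algebra_simps power2_eq_square)
  also have "[\<dots> = 1 + int (Suc n) * a] (mod a\<^sup>2)"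
    by (simp add: cong_def)
  finally show ?case .
qed simp

lemma geometric_sum_cong_mod_square:
  fixes y :: int
  assumes "odd n" and "int n dvd y - 1"
  shows "[(\<Sum>i<n. y ^ i) = int n] (mod (int n)\<^sup>2)"
proof -
  obtain t where y_eq: "y = 1 + int n * t"
    using assms(2) by (metis add.commute diff_add_cancel dvdE)
  obtain k where n_eq: "n = 2 * k + 1"
    using assms(1) oddE by blast
  have "2 * (\<Sum>i<n. int i) = int n * (2 * int k)"
    using double_gauss_sum[of "n - 1", where 'a = int] n_eq
    by (simp add: lessThan_Suc_atMost atLeast0AtMost)
  then have gauss: "(\<Sum>i<n. int i) = int n * int k"
    by simp
  have "[(\<Sum>i<n. y ^ i) = (\<Sum>i<n. 1 + int i * (int n * t))] (mod (int n * t)\<^sup>2)"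
    unfolding y_eq by (intro cong_sum one_plus_power_cong)
  then have "[(\<Sum>i<n. y ^ i) = (\<Sum>i<n. 1 + int i * (int n * t))] (mod (int n)\<^sup>2)"
    by (rule cong_dvd_modulus) (simp add: power_mult_distrib)
  also have "(\<Sum>i<n. 1 + int i * (int n * t)) = int n + (int n)\<^sup>2 * (int k * t)"
    by (simp add: sum.distrib flip: sum_distrib_right) (simp add: gauss power2_eq_square algebra_simps)
  also have "[\<dots> = int n] (mod (int n)\<^sup>2)"
    by (simp add: cong_def)
  finally show ?thesis .
qed

lemma odd_power_cong_self:
  fixes y m :: int
  assumes "[y ^ 3 = y] (mod m)" and "odd n"
  shows "[y ^ n = y] (mod m)"
proof -
  have "[y ^ (2 * k + 1) = y] (mod m)" for k
  proof (induction k)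
    case (Suc k)
    have "y ^ (2 * Suc k + 1) = y ^ (2 * k + 1) * y\<^sup>2"
      by (simp add: power_add power2_eq_square algebra_simps)
    also have "[\<dots> = y * y\<^sup>2] (mod m)"
      using Suc by (intro cong_mult) auto
    also have "y * y\<^sup>2 = y ^ 3"
      by (simp add: power2_eq_square power3_eq_cube)
    also have "[\<dots> = y] (mod m)"
      by (fact assms(1))
    finally show ?case .
  qed simp
  then show ?thesis
    using assms(2) by (metis oddE)
qed

lemma odd_square_cong_1_mod_8:
  fixes x :: int
  assumes "odd x"
  shows "[x\<^sup>2 = 1] (mod 8)"
proof -
  have "x mod 8 = 1 \<or> x mod 8 = 3 \<or> x mod 8 = 5 \<or> x mod 8 = 7"
    using assms by presburger
  then have "(x mod 8)\<^sup>2 mod 8 = 1"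
    by auto
  then show ?thesis
    by (simp add: cong_def power_mod)
qed

lemma QuadRes_3_iff:
  fixes q :: int
  shows "QuadRes 3 q \<longleftrightarrow> q mod 3 \<in> {0, 1}"
proof
  assume "QuadRes 3 q"
  then obtain z where "[z\<^sup>2 = q] (mod 3)"
    by (auto simp: QuadRes_def)
  then have "(z mod 3)\<^sup>2 mod 3 = q mod 3"
    by (simp add: cong_def power_mod)
  moreover have "z mod 3 = 0 \<or> z mod 3 = 1 \<or> z mod 3 = 2"
    by presburger
  ultimately show "q mod 3 \<in> {0, 1}"
    by auto
next
  assume "q mod 3 \<in> {0, 1}"
  then have "[(q mod 3)\<^sup>2 = q] (mod 3)"
    by (auto simp: cong_def)
  then show "QuadRes 3 q"
    unfolding QuadRes_def by blast
qed

lemma Legendre_3: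
  fixes q :: int
  assumes "\<not> 3 dvd q"
  shows "Legendre q 3 = (if [q = 1] (mod 3) then 1 else -1)"
proof -
  have "q mod 3 = 1 \<or> q mod 3 = 2"
    using assms by presburger
  then show ?thesis
    using assms by (auto simp: Legendre_def QuadRes_3_iff cong_def)
qed

lemma minus_one_power_half:
  fixes q :: int
  assumes "odd q" and "q > 0"
  shows "(-1::int) ^ nat ((q - 1) div 2) = (if [q = 1] (mod 4) then 1 else -1)"
proof -
  have "even (nat ((q - 1) div 2)) \<longleftrightarrow> [q = 1] (mod 4)"
    using assms by (simp add: even_nat_iff cong_def) presburger
  then show ?thesis
    by (simp add: minus_one_power_iff)
qed

lemma QuadRes_3_imp_cong_pm1_mod_12:
  fixes q :: int
  assumes "prime q" and "q > 3" and "QuadRes q 3"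
  shows "[q = 1] (mod 12) \<or> [q = -1] (mod 12)"
proof -
  have not_3_dvd: "\<not> 3 dvd q"
    using assms(1,2) primes_dvd_imp_eq[of 3 q] by (auto simp: prime_int_numeral_eq)
  have "\<not> q dvd 3"
    using assms(2) by (simp add: zdvd_not_zless)
  then have "Legendre 3 q = 1"
    using assms(3) by (simp add: Legendre_def cong_0_iff)
  moreover have "Legendre 3 q * Legendre q 3 = (-1) ^ nat ((3 - 1) div 2 * ((q - 1) div 2))"
    using assms(1,2) by (intro Quadratic_Reciprocity_int) (auto simp: prime_nat_iff_prime)
  ultimately have "Legendre q 3 = (if [q = 1] (mod 4) then 1 else -1)"
    using assms(1,2) by (simp add: minus_one_power_half prime_odd_int)
  then have "[q = 1] (mod 3) \<longleftrightarrow> [q = 1] (mod 4)"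
    using Legendre_3[OF not_3_dvd] by (auto split: if_splits)
  moreover have "[q = -1] (mod 3)" if "[q \<noteq> 1] (mod 3)"
    using not_3_dvd that by (simp add: cong_def) presburger
  moreover have "odd q"
    using assms(1,2) by (simp add: prime_odd_int)
  then have "[q = -1] (mod 4)" if "[q \<noteq> 1] (mod 4)"
    using that by (simp add: cong_def) presburger
  moreover have "coprime (3::int) 4"
    by (rule prime_imp_coprime) simp_all
  ultimately show ?thesis
    using coprime_cong_mult[of q 1 3 4] coprime_cong_mult[of q "-1" 3 4] by auto
qed

lemma cong_pm1_if_prime_factors_cong_pm1:
  fixes n m :: int
  assumes "n \<noteq> 0"
    and "\<And>q. prime q \<Longrightarrow> q dvd n \<Longrightarrow> [q = 1] (mod m) \<or> [q = -1] (mod m)"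
  shows "[n = 1] (mod m) \<or> [n = -1] (mod m)"
  using assms
proof (induction n rule: prime_divisors_induct)
  case (unit n)
  then show ?case
    by (auto simp: zdvd1_eq abs_if split: if_splits)
next
  case (factor q n)
  have "[q = 1] (mod m) \<or> [q = -1] (mod m)"
    using factor.prems(2) factor.hyps by simp
  moreover have "[n = 1] (mod m) \<or> [n = -1] (mod m)"
    using factor.prems by (intro factor.IH) auto
  ultimately show ?case
    using cong_mult[of q _ m n] by fastforce
qed simp

lemma square_minus_2_ne_cube:
  fixes x y :: int
  assumes "3 dvd x"
  shows "x\<^sup>2 - 2 \<noteq> y ^ 3"
proof -
  obtain c where "x = 3 * c"
    using assms by blast
  then have "(x\<^sup>2 - 2) mod 9 = 7"
    by (simp add: power2_eq_square) presburger
  moreover have "y ^ 3 mod 9 \<noteq> 7"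
  proof -
    have "y mod 9 = 0 \<or> y mod 9 = 1 \<or> y mod 9 = 2 \<or> y mod 9 = 3 \<or> y mod 9 = 4 \<or>
        y mod 9 = 5 \<or> y mod 9 = 6 \<or> y mod 9 = 7 \<or> y mod 9 = 8"
      by presburger
    then have "(y mod 9) ^ 3 mod 9 \<noteq> 7"
      by auto
    then show ?thesis
      by (simp add: power_mod)
  qed
  ultimately show ?thesis
    by metis
qed

locale square_minus_2_eq_power =
  fixes p :: nat and x y :: int
  assumes prime_p: "prime p" and p_ge_3: "p \<ge> 3" and eq: "x\<^sup>2 - 2 = y ^ p"
begin

definition S :: int where
  "S = (\<Sum>i<p. y ^ i)"

lemma odd_p: "odd p"
  using prime_p p_ge_3 prime_odd_nat by auto

lemma odd_x: "odd x"
proof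
  assume "even x"
  then have "4 dvd x\<^sup>2"
    by (auto simp: power2_eq_square)
  have "even (y ^ p)"
    using \<open>even x\<close> eq[symmetric] by simp
  then have "even y"
    using p_ge_3 by simp
  then have "4 dvd y ^ p"
    using dvd_power_le[of 2 y 2 p] p_ge_3 by simp
  with \<open>4 dvd x\<^sup>2\<close> have "4 dvd x\<^sup>2 - y ^ p"
    by (rule dvd_diff)
  then show False
    using eq by (simp add: algebra_simps)
qed

lemma y_cong_minus_1_mod_8: "[y = -1] (mod 8)"
proof -
  have "[x\<^sup>2 - 2 = 1 - 2] (mod 8)"
    using odd_square_cong_1_mod_8[OF odd_x] by (rule cong_diff) simp
  then have y_pow: "[y ^ p = -1] (mod 8)"
    using eq by simp
  have "odd m" if "[m = -1] (mod 8)" for m :: int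
    using that by (simp add: cong_def) presburger
  with y_pow have "odd (y ^ p)"
    by blast
  then have "odd y"
    using p_ge_3 by simp
  then have "[y * y\<^sup>2 = y * 1] (mod 8)"
    by (intro cong_scalar_left odd_square_cong_1_mod_8)
  then have "[y ^ 3 = y] (mod 8)"
    by (simp add: power2_eq_square power3_eq_cube mult.assoc)
  then have "[y ^ p = y] (mod 8)"
    using odd_p by (rule odd_power_cong_self)
  with y_pow show ?thesis
    by (metis cong_sym cong_trans)
qed

lemma power_minus_1_eq: "y ^ p - 1 = (y - 1) * S"
  unfolding S_def by (rule power_diff_1_eq)

lemma S_eq_quotient: "(y ^ p - 1) div (y - 1) = S"
proof -
  have "y \<noteq> 1"
    using y_cong_minus_1_mod_8 by (auto simp: cong_def)
  then show ?thesis
    by (simp add: power_minus_1_eq)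
qed

lemma S_cong_1_mod_8: "[S = 1] (mod 8)"
  unfolding S_def using y_cong_minus_1_mod_8 odd_p by (rule geometric_sum_cong_of_cong_minus_1)

lemma odd_S: "odd S"
  using S_cong_1_mod_8 by (simp add: cong_def) presburger

lemma prime_factor_S_eq_p_or_cong_1:
  assumes "prime q" and "q dvd S"
  shows "q = int p \<or> [q = 1] (mod int p)"
proof (cases "[y = 1] (mod q)")
  case True
  then have "[S = int p] (mod q)"
    unfolding S_def by (rule geometric_sum_cong_of_cong_1)
  then have "q dvd int p"
    using assms(2) cong_dvd_iff by blast
  moreover have "prime (int p)"
    using prime_p by simp
  ultimately show ?thesis
    using primes_dvd_imp_eq[OF assms(1)] by blast
next
  case False
  have "q dvd y ^ p - 1"
    unfolding power_minus_1_eq using assms(2) by simp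
  then have "[y ^ p = 1] (mod q)"
    by (simp add: cong_iff_dvd_diff)
  then show ?thesis
    using prime_cong_1_if_prime_order_int[OF prime_p assms(1)] False by blast
qed

lemma S_cong_mod_p:
  "(\<not> int p dvd y - 1 \<and> [S = 1] (mod int p)) \<or>
   (int p dvd y - 1 \<and> [S = int p] (mod (int p)\<^sup>2))"
proof (cases "int p dvd y - 1")
  case False
  have "int p dvd y ^ p - y"
    using fermat_little_int[OF prime_p] by (simp add: cong_iff_dvd_diff)
  also have "y ^ p - y = (y - 1) * (S - 1)"
    using power_minus_1_eq by (simp add: algebra_simps)
  finally have "int p dvd S - 1"
    using False prime_p by (simp add: prime_dvd_mult_iff)
  with False show ?thesis
    by (simp add: cong_iff_dvd_diff)
next
  case True
  then show ?thesis
    unfolding S_def using odd_p geometric_sum_cong_mod_square by simp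
qed

lemma prime_factor_S_cong_pm1_mod_12:
  assumes "prime q" and "q dvd S"
  shows "[q = 1] (mod 12) \<or> [q = -1] (mod 12)"
proof -
  have "q dvd y ^ p - 1"
    unfolding power_minus_1_eq using assms(2) by simp
  moreover have "y ^ p - 1 = x\<^sup>2 - 3"
    using eq by simp
  ultimately have x_sq: "[x\<^sup>2 = 3] (mod q)"
    by (simp add: cong_iff_dvd_diff)
  have "q \<noteq> 2"
    using assms(2) odd_S by auto
  moreover have "q \<noteq> 3"
  proof
    assume "q = 3"
    have "\<not> [3 = 1] (mod int p)"
    proof
      assume "[3 = 1] (mod int p)"
      then have "int p dvd 2"
        by (simp add: cong_iff_dvd_diff)
      then show False
        using p_ge_3 zdvd_imp_le[of "int p" 2] by simp
    qed
    then have "p = 3"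
      using prime_factor_S_eq_p_or_cong_1[OF assms] \<open>q = 3\<close> by simp
    have "3 dvd x\<^sup>2"
      using x_sq \<open>q = 3\<close> by (simp add: cong_def dvd_eq_mod_eq_0)
    then have "3 dvd x"
      using prime_dvd_power[of 3 x 2] by simp
    then show False
      using eq \<open>p = 3\<close> square_minus_2_ne_cube by blast
  qed
  moreover have "q \<ge> 2"
    using assms(1) prime_ge_2_int by blast
  ultimately have "q > 3"
    by linarith
  moreover have "QuadRes q 3"
    using x_sq unfolding QuadRes_def by blast
  ultimately show ?thesis
    using QuadRes_3_imp_cong_pm1_mod_12[OF assms(1)] by blast
qed

lemma p_cong_pm1_mod_12_if_dvd:
  assumes "int p dvd y - 1"
  shows "[int p = 1] (mod 12) \<or> [int p = -1] (mod 12)"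
proof -
  have "[S = int p] (mod (int p)\<^sup>2)"
    using S_cong_mod_p assms by blast
  then have "[S = int p] (mod int p)"
    by (rule cong_dvd_modulus) simp
  then have "int p dvd S"
    by (simp add: cong_dvd_iff)
  then show ?thesis
    using prime_p by (intro prime_factor_S_cong_pm1_mod_12) simp_all
qed

lemma S_cong_1_mod_24: "[S = 1] (mod 24)"
proof -
  have "S \<noteq> 0"
    using odd_S by auto
  then have "[S = 1] (mod 12) \<or> [S = -1] (mod 12)"
    using prime_factor_S_cong_pm1_mod_12 by (rule cong_pm1_if_prime_factors_cong_pm1)
  moreover have "[S \<noteq> -1] (mod 12)"
  proof
    assume "[S = -1] (mod 12)"
    then have "[S = -1] (mod 4)"
      by (rule cong_dvd_modulus) simp
    moreover have "[S = 1] (mod 4)"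
      using S_cong_1_mod_8 by (rule cong_dvd_modulus) simp
    ultimately have "[-1 = 1] (mod (4::int))"
      by (metis cong_sym cong_trans)
    then show False
      by (simp add: cong_def)
  qed
  ultimately have "[S = 1] (mod 3)"
    by (auto elim: cong_dvd_modulus)
  moreover have "coprime (3::int) 8"
    by (rule prime_imp_coprime) simp_all
  ultimately have "[S = 1] (mod 3 * 8)"
    using S_cong_1_mod_8 coprime_cong_mult by blast
  then show ?thesis
    by simp
qed

lemma not_3_dvd_x:
  assumes "p mod 3 = 2 \<or> p = 3"
  shows "\<not> 3 dvd x"
proof
  assume "3 dvd x"
  then obtain c where "x = 3 * c"
    by blast
  then have "y ^ p = 9 * c\<^sup>2 - 2"
    using eq by (simp add: power_mult_distrib)
  moreover have "(9 * m - 2) mod 3 = 1" for m :: int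
    by presburger
  ultimately have "[y ^ p = 1] (mod 3)"
    by (simp add: cong_def)
  moreover have "[y ^ 3 = y] (mod 3)"
    using fermat_little_int[of 3 y] by simp
  then have "[y ^ p = y] (mod 3)"
    using odd_p by (rule odd_power_cong_self)
  ultimately have "[y = 1] (mod 3)"
    by (metis cong_sym cong_trans)
  then have "[S = int p] (mod 3)"
    unfolding S_def by (rule geometric_sum_cong_of_cong_1)
  moreover have "[S = 1] (mod 3)"
    using S_cong_1_mod_24 by (rule cong_dvd_modulus) simp
  ultimately have "[int p = int 1] (mod int 3)"
    by (metis cong_sym cong_trans of_nat_1 of_nat_numeral)
  then have "p mod 3 = 1"
    by (simp only: cong_int_iff) (simp add: cong_def)
  with assms show False
    by auto
qed

end

theorem theorem2p8:
  fixes p :: nat and x y :: int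
  assumes "prime p" and "p \<ge> 3"
    and "x^2 - 2 = y^p" and "y \<noteq> -1"
  shows "(\<forall>q::int. prime q \<and> q dvd ((y^p - 1) div (y - 1)) \<longrightarrow>
            [q = 1] (mod 12) \<or> [q = -1] (mod 12))
    \<and> (\<forall>q::int. prime q \<and> q dvd ((y^p - 1) div (y - 1)) \<longrightarrow>
            q = int p \<or> [q = 1] (mod (int p)))
    \<and> ((\<not> int p dvd (y - 1) \<and> [(y^p - 1) div (y - 1) = 1] (mod (int p)))
       \<or> (int p dvd (y - 1) \<and> [(y^p - 1) div (y - 1) = int p] (mod (int p ^ 2))))
    \<and> (int p dvd (y - 1) \<longrightarrow> [int p = 1] (mod 12) \<or> [int p = -1] (mod 12))
    \<and> [(y^p - 1) div (y - 1) = 1] (mod 24)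
    \<and> ((p mod 3 = 2 \<or> p = 3) \<longrightarrow> \<not> (3::int) dvd x)"
proof -
  interpret square_minus_2_eq_power p x y
    using assms by unfold_locales
  show ?thesis
    unfolding S_eq_quotient
    using prime_factor_S_cong_pm1_mod_12 prime_factor_S_eq_p_or_cong_1 S_cong_mod_p
      p_cong_pm1_mod_12_if_dvd S_cong_1_mod_24 not_3_dvd_x
    by simp
qed

end
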